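(* Let $k\in\mathbb{Z}$ with $k<-2$, $j\in\{-\tfrac12,-1,\dots\}$, $s\in\mathbb{Z}$, and let $V$ be any of the modules $D^{k,s}_0$, $D^{+,k,s}_j$, $D^{-,k,s}_j$, with its $\mathbb{Z}\times\mathbb{Z}$ grading $V=\bigoplus_{m,n\in\mathbb{Z}}V_{m,n}$. Then (i) $\dim_\mathbb{C}V_{m,n}<\infty$ for all $m,n\in\mathbb{Z}$; (ii) for every $n\in\mathbb{Z}$ there is $N_n\in\mathbb{Z}$ such that $V_{m,n}=\{0\}$ for all $m\le N_n$.
   Context: $\mathfrak{sl}_2$ has basis $J^+,J^-,J^0$ with $[J^+,J^-]=J^0$, $[J^0,J^\pm]=\pm2J^\pm$. For $j\in-\tfrac12\mathbb{N}$, $D^+_j$ is the $\mathfrak{sl}_2$-module with basis $\{|j,m\rangle_+\}_{m\ge0}$, $J^0|j,m\rangle_+=2(m-j)|j,m\rangle_+$, $J^+|j,m\rangle_+=\sqrt{(m+1)(m-2j)}|j,m+1\rangle_+$, $J^-|j,m\rangle_+=-\sqrt{m(m-1-2j)}|j,m-1\rangle_+$; $D^-_j$ has basis $\{|j,m\rangle_-\}_{m\ge0}$, $J^0|j,m\rangle_-=2(j-m)|j,m\rangle_-$, $J^+|j,m\rangle_-=-\sqrt{m(m-1-2j)}|j,m-1\rangle_-$, $J^-|j,m\rangle_-=\sqrt{(m+1)(m-2j)}|j,m+1\rangle_-$; $D_0=\mathbb{C}$ is the trivial module. $\widehat{\mathfrak{sl}}_2$ has generators $J^a_n$ ($a\in\{+,-,0\}$,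 $n\in\mathbb{Z}$), $K$, $d$ with $[J^+_m,J^-_n]=J^0_{m+n}+Km\delta_{m+n,0}$, $[J^0_m,J^\pm_n]=\pm2J^\pm_{m+n}$, $[J^0_m,J^0_n]=2Km\delta_{m+n,0}$, $[J^\pm_m,J^\pm_n]=0$, $[d,J^a_n]=nJ^a_n$, $K$ central; $J^a_0$ is identified with $J^a$. With $\mathfrak{r}_+=\mathrm{span}\{J^a_n:n\ge1\}$, $\mathfrak{k}=\mathrm{span}\{J^a_0,K,d\}$, the prolongation of $V\in\{D^\pm_j,D_0\}$ at level $k$ is $V^k=\mathcal{U}(\widehat{\mathfrak{sl}}_2)\otimes_{\mathcal{U}(\mathfrak{k}\oplus\mathfrak{r}_+)}V^{(k)}$, where on $V^{(k)}=V$ the element $K$ acts as $k$, $\mathfrak{r}_+$ as $0$, and $d$ by the scalar $-\frac{j(j+1)}{k+2}$ (for $D^\pm_j$) resp. $0$ (for $D_0$). The spectral flow automorphism $\vartheta_s$ is $J^\pm_n\mapsto J^\pm_{n\mp s}$, $J^0_n\mapsto J^0_n-sK\delta_{n,0}$, $K\mapsto K$, $d\mapsto d+\frac s2J^0_0-\frac{s^2}4K$, and for a module $(W,\rho)$, $W^s=(W,\rho\circ\vartheta_s)$. Set $D^{\pm,k,s}_j=((D^\pm_j)^k)^s$, $D^{k,s}_0=((D_0)^k)^s$. The distinguished cyclic vector of such a module is $v_0=1\otimes|j,0\rangle_\pm$ resp. $1\otimes1$; it is a simultaneous eigenvector of $d$ and $J^0_0$ (for the flowed action) with eigenvalues $\delta_0,q_0$.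 The $\mathbb{Z}\times\mathbb{Z}$ grading is $V_{m,n}=\{v\in V: dv=(\delta_0-m)v,\ J^0_0v=(q_0+2n)v\}$ (so $-d$, which acts as the Sugawara $L_0$, has eigenvalue $-\delta_0+m$ on $V_{m,n}$), and $V=\bigoplus_{m,n}V_{m,n}$. *)

theory Defs
  imports Complex_Main
begin

text \<open>Basis of the affine Lie algebra: J^+_n, J^-_n, J^0_n, K, d.\<close>
datatype gen = Jp int | Jm int | J0 int | Kc | Dd

type_synonym lc = "(complex \<times> gen) list"

fun br :: "gen \<Rightarrow> gen \<Rightarrow> lc" where
  "br (Jp m) (Jm n) = [(1, J0 (m + n))] @ (if m + n = 0 then [(of_int m, Kc)] else [])"
| "br (Jm n) (Jp m) = [(-1, J0 (m + n))] @ (if m + n = 0 then [(- of_int m, Kc)] else [])"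
| "br (J0 m) (Jp n) = [(2, Jp (m + n))]"
| "br (Jp n) (J0 m) = [(-2, Jp (m + n))]"
| "br (J0 m) (Jm n) = [(-2, Jm (m + n))]"
| "br (Jm n) (J0 m) = [(2, Jm (m + n))]"
| "br (J0 m) (J0 n) = (if m + n = 0 then [(2 * of_int m, Kc)] else [])"
| "br Dd (Jp n) = [(of_int n, Jp n)]"
| "br Dd (Jm n) = [(of_int n, Jm n)]"
| "br Dd (J0 n) = [(of_int n, J0 n)]"
| "br (Jp n) Dd = [(- of_int n, Jp n)]"
| "br (Jm n) Dd = [(- of_int n, Jm n)]"
| "br (J0 n) Dd = [(- of_int n, J0 n)]"
| "br _ _ = []"

text \<open>Spectral flow automorphism theta_s on basis elements.\<close>
fun flow :: "int \<Rightarrow> gen \<Rightarrow> lc" where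
  "flow s (Jp n) = [(1, Jp (n - s))]"
| "flow s (Jm n) = [(1, Jm (n + s))]"
| "flow s (J0 n) = [(1, J0 n)] @ (if n = 0 then [(- of_int s, Kc)] else [])"
| "flow s Kc = [(1, Kc)]"
| "flow s Dd = [(1, Dd), (of_int s / 2, J0 0), (- ((of_int s) ^ 2) / 4, Kc)]"

text \<open>The parabolic subalgebra k + r_+ : J^a_n (n \<ge> 0), K, d.\<close>
fun in_p :: "gen \<Rightarrow> bool" where
  "in_p (Jp n) = (n \<ge> 0)"
| "in_p (Jm n) = (n \<ge> 0)"
| "in_p (J0 n) = (n \<ge> 0)"
| "in_p Kc = True"
| "in_p Dd = True"

text \<open>Actions of k + r_+ on V^(k) (only used on generators satisfying in_p).
  Basis vectors of V are indexed by 'b; the action of a generator on a basis vector is a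
  finite formal linear combination of basis vectors.\<close>

fun pact_triv :: "int \<Rightarrow> gen \<Rightarrow> unit \<Rightarrow> (complex \<times> unit) list" where
  "pact_triv k Kc u = [(of_int k, u)]"
| "pact_triv k _ u = []"

definition delta_j :: "int \<Rightarrow> real \<Rightarrow> real" where
  "delta_j k j = - (j * (j + 1)) / (real_of_int k + 2)"

fun pact_plus :: "int \<Rightarrow> real \<Rightarrow> gen \<Rightarrow> nat \<Rightarrow> (complex \<times> nat) list" where
  "pact_plus k j (J0 n) m = (if n = 0 then [(of_real (2 * (real m - j)), m)] else [])"
| "pact_plus k j (Jp n) m =
     (if n = 0 then [(of_real (sqrt ((real m + 1) * (real m - 2 * j))), m + 1)] else [])"
| "pact_plus k j (Jm n) m =
     (if n = 0 \<and> m > 0 then [(of_real (- sqrt (real m * (real m - 1 - 2 * j))), m - 1)] else [])"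
| "pact_plus k j Kc m = [(of_int k, m)]"
| "pact_plus k j Dd m = [(of_real (delta_j k j), m)]"

fun pact_minus :: "int \<Rightarrow> real \<Rightarrow> gen \<Rightarrow> nat \<Rightarrow> (complex \<times> nat) list" where
  "pact_minus k j (J0 n) m = (if n = 0 then [(of_real (2 * (j - real m)), m)] else [])"
| "pact_minus k j (Jp n) m =
     (if n = 0 \<and> m > 0 then [(of_real (- sqrt (real m * (real m - 1 - 2 * j))), m - 1)] else [])"
| "pact_minus k j (Jm n) m =
     (if n = 0 then [(of_real (sqrt ((real m + 1) * (real m - 2 * j))), m + 1)] else [])"
| "pact_minus k j Kc m = [(of_int k, m)]"
| "pact_minus k j Dd m = [(of_real (delta_j k j), m)]"

text \<open>The free space: finitely supported complex functions on (word in generators) x (basis of V).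
  The word g1 ... gr paired with b stands for g1 \<cdots> gr \<otimes> b.\<close>

definition fin_supp :: "(gen list \<times> 'b \<Rightarrow> complex) \<Rightarrow> bool" where
  "fin_supp f \<longleftrightarrow> finite {z. f z \<noteq> 0}"

definition word_elem :: "gen list \<Rightarrow> 'b \<Rightarrow> (gen list \<times> 'b \<Rightarrow> complex)" where
  "word_elem w b = (\<lambda>z. if z = (w, b) then 1 else 0)"

text \<open>Relations of U(g): w x y w' - w y x w' - w [x,y] w'.\<close>
definition comm_gen :: "gen list \<Rightarrow> gen \<Rightarrow> gen \<Rightarrow> gen list \<Rightarrow> 'b \<Rightarrow> (gen list \<times> 'b \<Rightarrow> complex)" where
  "comm_gen w x y w' b = (\<lambda>z. word_elem (w @ [x, y] @ w') b z - word_elem (w @ [y, x] @ w') b z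
      - (\<Sum>(c, h)\<leftarrow>br x y. c * word_elem (w @ [h] @ w') b z))"

text \<open>Relations of the tensor product over U(k + r_+): w x \<otimes> b - w \<otimes> (x . b).\<close>
definition ind_gen :: "(gen \<Rightarrow> 'b \<Rightarrow> (complex \<times> 'b) list) \<Rightarrow> gen list \<Rightarrow> gen \<Rightarrow> 'b
    \<Rightarrow> (gen list \<times> 'b \<Rightarrow> complex)" where
  "ind_gen pact w x b = (\<lambda>z. word_elem (w @ [x]) b z - (\<Sum>(c, b')\<leftarrow>pact x b. c * word_elem w b' z))"

text \<open>The subspace spanned by all relations; the induced module is the quotient by it.\<close>
inductive_set rel :: "(gen \<Rightarrow> 'b \<Rightarrow> (complex \<times> 'b) list) \<Rightarrow> (gen list \<times> 'b \<Rightarrow> complex) set"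
  for pact :: "gen \<Rightarrow> 'b \<Rightarrow> (complex \<times> 'b) list" where
  rel_zero: "(\<lambda>_. 0) \<in> rel pact"
| rel_comm: "f \<in> rel pact \<Longrightarrow> (\<lambda>z. c * comm_gen w x y w' b z + f z) \<in> rel pact"
| rel_ind: "in_p x \<Longrightarrow> f \<in> rel pact \<Longrightarrow> (\<lambda>z. c * ind_gen pact w x b z + f z) \<in> rel pact"

definition qeq :: "(gen \<Rightarrow> 'b \<Rightarrow> (complex \<times> 'b) list) \<Rightarrow> (gen list \<times> 'b \<Rightarrow> complex)
    \<Rightarrow> (gen list \<times> 'b \<Rightarrow> complex) \<Rightarrow> bool" where
  "qeq pact f g \<longleftrightarrow> (\<lambda>z. f z - g z) \<in> rel pact"

definition lmul :: "gen \<Rightarrow> (gen list \<times> 'b \<Rightarrow> complex) \<Rightarrow> (gen list \<times> 'b \<Rightarrow> complex)" where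
  "lmul g f = (\<lambda>(w, b). case w of [] \<Rightarrow> 0 | h # w' \<Rightarrow> if h = g then f (w', b) else 0)"

definition act_lc :: "lc \<Rightarrow> (gen list \<times> 'b \<Rightarrow> complex) \<Rightarrow> (gen list \<times> 'b \<Rightarrow> complex)" where
  "act_lc L f = (\<lambda>z. \<Sum>(c, g)\<leftarrow>L. c * lmul g f z)"

text \<open>Action of a generator in the spectrally flowed module W^s = (W, rho o theta_s).\<close>
definition flow_act :: "int \<Rightarrow> gen \<Rightarrow> (gen list \<times> 'b \<Rightarrow> complex) \<Rightarrow> (gen list \<times> 'b \<Rightarrow> complex)" where
  "flow_act s g f = act_lc (flow s g) f"

text \<open>Representatives of V_{m,n} (given the eigenvalues delta0, q0 of the cyclic vector).\<close>
definition Vmn :: "(gen \<Rightarrow> 'b \<Rightarrow> (complex \<times> 'b) list) \<Rightarrow> int \<Rightarrow> complex \<Rightarrow> complex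
    \<Rightarrow> int \<Rightarrow> int \<Rightarrow> (gen list \<times> 'b \<Rightarrow> complex) set" where
  "Vmn pact s delta0 q0 m n = {f. fin_supp f
     \<and> qeq pact (flow_act s Dd f) (\<lambda>z. (delta0 - of_int m) * f z)
     \<and> qeq pact (flow_act s (J0 0) f) (\<lambda>z. (q0 + 2 * of_int n) * f z)}"

definition cspan :: "(gen list \<times> 'b \<Rightarrow> complex) set \<Rightarrow> (gen list \<times> 'b \<Rightarrow> complex) set" where
  "cspan B = {g. \<exists>c. g = (\<lambda>z. \<Sum>v\<in>B. c v * v z)}"

text \<open>The two claims (i) and (ii) for the module induced from pact, flowed by s, with cyclic
  vector 1 \<otimes> b0, whose d- and J^0_0-eigenvalues are delta0 and q0.\<close>
definition grading_props :: "(gen \<Rightarrow> 'b \<Rightarrow> (complex \<times> 'b) list) \<Rightarrow> 'b \<Rightarrow> int \<Rightarrow> bool" where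
  "grading_props pact b0 s \<longleftrightarrow>
     (\<forall>delta0 q0.
        qeq pact (flow_act s Dd (word_elem [] b0)) (\<lambda>z. delta0 * word_elem [] b0 z)
      \<and> qeq pact (flow_act s (J0 0) (word_elem [] b0)) (\<lambda>z. q0 * word_elem [] b0 z)
      \<longrightarrow> (\<forall>m n. \<exists>B. finite B \<and> (\<forall>f \<in> Vmn pact s delta0 q0 m n. \<exists>g \<in> cspan B. qeq pact f g))
        \<and> (\<forall>n. \<exists>N. \<forall>m \<le> N. \<forall>f \<in> Vmn pact s delta0 q0 m n. f \<in> rel pact))"

end

theory Submission
  imports Defs "HOL-Library.Product_Plus"
begin

text \<open>
  Modulo the relations, every word \<open>g\<^sub>1 \<cdots> g\<^sub>r \<otimes> b\<close> can be straightened (PBW style, by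
  induction on the length) into a combination of words built from creation operators
  \<open>J\<^sup>a\<^sub>n\<close>, \<open>n < 0\<close>, alone, without changing the weight (total mode, total \<open>J\<^sup>0\<close>-charge).
  On such a word the flowed \<open>d\<close> and \<open>J\<^sup>0\<^sub>0\<close> act by scalars determined by, and determining,
  the weight; so, by separating eigencomponents, an element of \<open>V\<^sub>m\<^sub>,\<^sub>n\<close> is congruent to a
  combination of creation words of one fixed weight. There are finitely many of these since
  each creation operator lowers the mode by at least one, which gives (i); and since the
  mode of a creation word is \<open>\<le> 0\<close>, the \<open>d\<close>-eigenvalue is bounded, which gives (ii).
\<close>

lemma rel_add:
  assumes "f \<in> rel pact" "g \<in> rel pact"
  shows "(\<lambda>z. f z + g z) \<in> rel pact"
  using assms(1)
proof induct
  case rel_zero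
  then show ?case using assms(2) by simp
next
  case (rel_comm f c w x y w' b)
  from rel.rel_comm[OF rel_comm(2), of c w x y w' b] show ?case by (simp add: add.assoc)
next
  case (rel_ind x f c w b)
  from rel.rel_ind[OF rel_ind(1) rel_ind(3), of c w b] show ?case by (simp add: add.assoc)
qed

lemma rel_scale:
  assumes "f \<in> rel pact"
  shows "(\<lambda>z. a * f z) \<in> rel pact"
  using assms
proof induct
  case rel_zero
  then show ?case using rel.rel_zero by simp
next
  case (rel_comm f c w x y w' b)
  from rel.rel_comm[OF rel_comm(2), of "a * c" w x y w' b] show ?case
    by (simp add: algebra_simps)
next
  case (rel_ind x f c w b)
  from rel.rel_ind[OF rel_ind(1) rel_ind(3), of "a * c" w b] show ?case
    by (simp add: algebra_simps)
qed

lemma lmul_Nil: "lmul g f ([], b) = 0"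
  by (simp add: lmul_def)

lemma lmul_Cons: "lmul g f (h # w, b) = (if h = g then f (w, b) else 0)"
  by (simp add: lmul_def)

lemma lmul_linear: "lmul g (\<lambda>z. a * f z + h z) = (\<lambda>z. a * lmul g f z + lmul g h z)"
  by (auto simp: lmul_def fun_eq_iff split: list.split)

lemma lmul_zero: "lmul g (\<lambda>z. 0) = (\<lambda>z. 0)"
  by (auto simp: lmul_def fun_eq_iff split: list.split)

lemma lmul_diff: "lmul g (\<lambda>z. f z - h z) = (\<lambda>z. lmul g f z - lmul g h z)"
  by (auto simp: lmul_def fun_eq_iff split: list.split)

lemma lmul_scale: "lmul g (\<lambda>z. a * f z) = (\<lambda>z. a * lmul g f z)"
  by (auto simp: lmul_def fun_eq_iff split: list.split)

lemma lmul_sum: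
  "finite S \<Longrightarrow> lmul g (\<lambda>z. \<Sum>v\<in>S. F v z) = (\<lambda>z. \<Sum>v\<in>S. lmul g (F v) z)"
  by (induct S rule: finite_induct) (simp_all add: lmul_zero lmul_linear[of g 1, simplified])

lemma sum_list_case_prod_zero [simp]: "(\<Sum>(c, h)\<leftarrow>L. (0::complex)) = 0"
  by (induct L) auto

lemma lmul_comm_gen: "lmul g (comm_gen w x y w' b) = comm_gen (g # w) x y w' b"
proof
  fix z :: "gen list \<times> 'a"
  show "lmul g (comm_gen w x y w' b) z = comm_gen (g # w) x y w' b z"
    by (cases z; cases "fst z") (auto simp: lmul_Nil lmul_Cons comm_gen_def word_elem_def)
qed

lemma lmul_ind_gen: "lmul g (ind_gen pact w x b) = ind_gen pact (g # w) x b"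
proof
  fix z :: "gen list \<times> 'a"
  show "lmul g (ind_gen pact w x b) z = ind_gen pact (g # w) x b z"
    by (cases z; cases "fst z") (auto simp: lmul_Nil lmul_Cons ind_gen_def word_elem_def)
qed

lemma rel_lmul:
  assumes "f \<in> rel pact"
  shows "lmul g f \<in> rel pact"
  using assms
proof induct
  case rel_zero
  then show ?case using rel.rel_zero by (simp add: lmul_zero)
next
  case (rel_comm f c w x y w' b)
  from rel.rel_comm[OF rel_comm(2), of c "g # w" x y w' b] show ?case
    by (simp add: lmul_linear lmul_comm_gen)
next
  case (rel_ind x f c w b)
  from rel.rel_ind[OF rel_ind(1) rel_ind(3), of c "g # w" b] show ?case
    by (simp add: lmul_linear lmul_ind_gen)
qed

lemma qeq_refl: "qeq pact f f"
  unfolding qeq_def using rel.rel_zero by simp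

lemma qeq_scale: "qeq pact f g \<Longrightarrow> qeq pact (\<lambda>z. a * f z) (\<lambda>z. a * g z)"
  unfolding qeq_def using rel_scale[of "\<lambda>z. f z - g z" pact a] by (simp add: algebra_simps)

lemma qeq_sym: "qeq pact f g \<Longrightarrow> qeq pact g f"
  unfolding qeq_def using rel_scale[of "\<lambda>z. f z - g z" pact "-1"] by (simp add: algebra_simps)

lemma qeq_trans: "qeq pact f g \<Longrightarrow> qeq pact g h \<Longrightarrow> qeq pact f h"
  unfolding qeq_def using rel_add[of "\<lambda>z. f z - g z" pact "\<lambda>z. g z - h z"]
  by (simp add: algebra_simps)

lemma qeq_add:
  "qeq pact f g \<Longrightarrow> qeq pact f' g' \<Longrightarrow> qeq pact (\<lambda>z. f z + f' z) (\<lambda>z. g z + g' z)"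
  unfolding qeq_def using rel_add[of "\<lambda>z. f z - g z" pact "\<lambda>z. f' z - g' z"]
  by (simp add: algebra_simps)

lemma qeq_diff:
  "qeq pact f g \<Longrightarrow> qeq pact f' g' \<Longrightarrow> qeq pact (\<lambda>z. f z - f' z) (\<lambda>z. g z - g' z)"
  using qeq_add[of pact f g "\<lambda>z. - f' z" "\<lambda>z. - g' z"] qeq_scale[of pact f' g' "-1"] by simp

lemma qeq_cancel_scalar:
  assumes "a \<noteq> 0" "qeq pact (\<lambda>z. a * f z) (\<lambda>z. a * g z)"
  shows "qeq pact f g"
proof -
  have "\<And>h. (\<lambda>z. inverse a * (a * h z)) = h"
    using assms(1) by (simp add: fun_eq_iff)
  then show ?thesis
    using qeq_scale[OF assms(2), of "inverse a"] by metis
qed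

lemma qeq_lmul: "qeq pact f g \<Longrightarrow> qeq pact (lmul h f) (lmul h g)"
  unfolding qeq_def using rel_lmul[of "\<lambda>z. f z - g z" pact h] by (simp add: lmul_diff)

lemma qeq_sum:
  "finite S \<Longrightarrow> (\<And>v. v \<in> S \<Longrightarrow> qeq pact (F v) (G v))
    \<Longrightarrow> qeq pact (\<lambda>z. \<Sum>v\<in>S. F v z) (\<lambda>z. \<Sum>v\<in>S. G v z)"
  by (induct S rule: finite_induct) (simp_all add: qeq_refl qeq_add)

lemma act_lc_Nil [simp]: "act_lc [] f = (\<lambda>z. 0)"
  by (simp add: act_lc_def)

lemma act_lc_Cons [simp]: "act_lc ((c, g) # L) f = (\<lambda>z. c * lmul g f z + act_lc L f z)"
  by (simp add: act_lc_def)

lemma act_lc_append [simp]: "act_lc (L1 @ L2) f = (\<lambda>z. act_lc L1 f z + act_lc L2 f z)"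
  by (simp add: act_lc_def)

lemma qeq_act_lc: "qeq pact f g \<Longrightarrow> qeq pact (act_lc L f) (act_lc L g)"
proof (induct L)
  case Nil
  then show ?case by (simp add: qeq_refl)
next
  case (Cons a L)
  then show ?case
    by (cases a) (simp add: qeq_add qeq_scale qeq_lmul)
qed

lemma act_lc_linear:
  "act_lc L (\<lambda>z. a * f z + h z) = (\<lambda>z. a * act_lc L f z + act_lc L h z)"
proof (induct L)
  case Nil
  then show ?case by simp
next
  case (Cons x L)
  obtain c g where x: "x = (c, g)" by (cases x)
  show ?case
    unfolding x act_lc_Cons Cons lmul_linear by (simp add: fun_eq_iff algebra_simps)
qed

lemma act_lc_zero: "act_lc L (\<lambda>z. 0) = (\<lambda>z. 0)"
  by (induct L) (auto simp: lmul_zero)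

lemma act_lc_scale: "act_lc L (\<lambda>z. a * f z) = (\<lambda>z. a * act_lc L f z)"
  using act_lc_linear[of L a f "\<lambda>z. 0"] by (simp add: act_lc_zero)

lemma act_lc_diff: "act_lc L (\<lambda>z. f z - h z) = (\<lambda>z. act_lc L f z - act_lc L h z)"
  using act_lc_linear[of L "-1" h f] by (simp add: algebra_simps)

lemma act_lc_sum:
  "finite S \<Longrightarrow> act_lc L (\<lambda>z. \<Sum>v\<in>S. F v z) = (\<lambda>z. \<Sum>v\<in>S. act_lc L (F v) z)"
  by (induct S rule: finite_induct) (simp_all add: act_lc_zero act_lc_linear[of L 1, simplified])

section \<open>Basis vectors and eigencomponents\<close>

definition basis_vec :: "gen list \<times> 'b \<Rightarrow> gen list \<times> 'b \<Rightarrow> complex" where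
  "basis_vec v = (\<lambda>z. if z = v then 1 else 0)"

definition supp :: "(gen list \<times> 'b \<Rightarrow> complex) \<Rightarrow> (gen list \<times> 'b) set" where
  "supp f = {z. f z \<noteq> 0}"

lemma word_elem_eq_basis_vec: "word_elem w b = basis_vec (w, b)"
  by (auto simp: word_elem_def basis_vec_def fun_eq_iff)

lemma fin_supp_iff_finite_supp: "fin_supp f \<longleftrightarrow> finite (supp f)"
  by (simp add: fin_supp_def supp_def)

lemma inj_basis_vec: "inj basis_vec"
  by (rule injI) (metis basis_vec_def zero_neq_one)

lemma lmul_basis_vec: "lmul g (basis_vec v) = basis_vec (g # fst v, snd v)"
  by (auto simp: lmul_def basis_vec_def fun_eq_iff split: list.split)

lemma basis_vec_expansion:
  "finite S \<Longrightarrow> supp f \<subseteq> S \<Longrightarrow> (\<lambda>z. \<Sum>v\<in>S. f v * basis_vec v z) = f"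
  by (auto simp: basis_vec_def fun_eq_iff supp_def if_distrib cong: if_cong)

lemma qeq_comm_gen:
  "qeq pact (basis_vec (x # y # u, b))
     (\<lambda>z. basis_vec (y # x # u, b) z + (\<Sum>(c, h)\<leftarrow>br x y. c * basis_vec (h # u, b) z))"
proof -
  have "(\<lambda>z. 1 * comm_gen [] x y u b z + 0) \<in> rel pact"
    by (rule rel_comm[OF rel_zero])
  then show ?thesis
    by (simp add: qeq_def comm_gen_def word_elem_eq_basis_vec diff_diff_add add.commute)
qed

lemma qeq_ind_gen:
  "in_p x \<Longrightarrow> qeq pact (basis_vec ([x], b)) (\<lambda>z. \<Sum>(c, b')\<leftarrow>pact x b. c * basis_vec ([], b') z)"
proof -
  assume "in_p x"
  then have "(\<lambda>z. 1 * ind_gen pact [] x b z + 0) \<in> rel pact"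
    by (rule rel_ind[OF _ rel_zero])
  then show ?thesis by (simp add: qeq_def ind_gen_def word_elem_eq_basis_vec)
qed

lemma qeq_act_lc_diagonal:
  assumes eigen: "\<And>v. qeq pact (act_lc L (basis_vec v)) (\<lambda>z. e v * basis_vec v z)"
    and "fin_supp g"
  shows "qeq pact (act_lc L g) (\<lambda>v. e v * g v)"
proof -
  have fin: "finite (supp g)"
    using \<open>fin_supp g\<close> by (simp add: fin_supp_iff_finite_supp)
  have "act_lc L g = act_lc L (\<lambda>z. \<Sum>v\<in>supp g. g v * basis_vec v z)"
    by (simp add: basis_vec_expansion[OF fin])
  also have "\<dots> = (\<lambda>z. \<Sum>v\<in>supp g. g v * act_lc L (basis_vec v) z)"
    by (simp add: act_lc_sum[OF fin] act_lc_scale)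
  finally have "act_lc L g = (\<lambda>z. \<Sum>v\<in>supp g. g v * act_lc L (basis_vec v) z)" .
  moreover have "qeq pact (\<lambda>z. \<Sum>v\<in>supp g. g v * act_lc L (basis_vec v) z)
      (\<lambda>z. \<Sum>v\<in>supp g. (e v * g v) * basis_vec v z)"
  proof (rule qeq_sum[OF fin])
    fix v
    show "qeq pact (\<lambda>z. g v * act_lc L (basis_vec v) z) (\<lambda>z. (e v * g v) * basis_vec v z)"
      using qeq_scale[OF eigen[of v], of "g v"] by (simp add: ac_simps)
  qed
  moreover have "supp (\<lambda>v. e v * g v) \<subseteq> supp g"
    by (auto simp: supp_def)
  ultimately show ?thesis
    using basis_vec_expansion[OF fin] by simp
qed

definition represented_on :: "(gen \<Rightarrow> 'b \<Rightarrow> (complex \<times> 'b) list) \<Rightarrow> (gen list \<times> 'b) set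
    \<Rightarrow> (gen list \<times> 'b \<Rightarrow> complex) \<Rightarrow> bool" where
  "represented_on pact A f \<longleftrightarrow> (\<exists>g. fin_supp g \<and> supp g \<subseteq> A \<and> qeq pact f g)"

lemma represented_onI:
  "fin_supp g \<Longrightarrow> supp g \<subseteq> A \<Longrightarrow> qeq pact f g \<Longrightarrow> represented_on pact A f"
  unfolding represented_on_def by blast

lemma represented_onE:
  assumes "represented_on pact A f"
  obtains g where "finite (supp g)" "supp g \<subseteq> A" "qeq pact f g"
  using assms by (auto simp: represented_on_def fin_supp_iff_finite_supp)

lemma represented_on_supp: "fin_supp f \<Longrightarrow> represented_on pact (supp f) f"
  by (rule represented_onI[of f]) (simp_all add: qeq_refl)

lemma represented_on_basis_vec: "v \<in> A \<Longrightarrow> represented_on pact A (basis_vec v)"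
  by (rule represented_onI[of "basis_vec v"]) (auto simp: fin_supp_def basis_vec_def supp_def qeq_refl)

lemma represented_on_mono: "represented_on pact A f \<Longrightarrow> A \<subseteq> B \<Longrightarrow> represented_on pact B f"
  unfolding represented_on_def by blast

lemma represented_on_qeq: "qeq pact f f' \<Longrightarrow> represented_on pact A f' \<Longrightarrow> represented_on pact A f"
  unfolding represented_on_def using qeq_trans by blast

lemma represented_on_zero: "represented_on pact A (\<lambda>z. 0)"
  by (rule represented_onI[of "\<lambda>z. 0"]) (simp_all add: fin_supp_def supp_def qeq_refl)

lemma represented_on_linear:
  assumes "represented_on pact A f" "represented_on pact A f'"
  shows "represented_on pact A (\<lambda>z. a * f z + f' z)"
proof -
  obtain g g' where g: "finite (supp g)" "supp g \<subseteq> A" "qeq pact f g"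
    and g': "finite (supp g')" "supp g' \<subseteq> A" "qeq pact f' g'"
    using assms by (meson represented_onE)
  have sub: "supp (\<lambda>z. a * g z + g' z) \<subseteq> supp g \<union> supp g'"
    by (auto simp: supp_def)
  show ?thesis
  proof (rule represented_onI)
    show "fin_supp (\<lambda>z. a * g z + g' z)"
      using g(1) g'(1) finite_subset[OF sub] by (simp add: fin_supp_iff_finite_supp)
    show "supp (\<lambda>z. a * g z + g' z) \<subseteq> A"
      using sub g(2) g'(2) by blast
    show "qeq pact (\<lambda>z. a * f z + f' z) (\<lambda>z. a * g z + g' z)"
      by (rule qeq_add[OF qeq_scale[OF g(3)] g'(3)])
  qed
qed

lemma represented_on_sum:
  "finite S \<Longrightarrow> (\<And>v. v \<in> S \<Longrightarrow> represented_on pact A (F v))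
    \<Longrightarrow> represented_on pact A (\<lambda>z. \<Sum>v\<in>S. c v * F v z)"
  by (induct S rule: finite_induct) (simp_all add: represented_on_zero represented_on_linear)

lemma represented_on_sum_list:
  "(\<And>c x. (c, x) \<in> set L \<Longrightarrow> represented_on pact A (F x))
    \<Longrightarrow> represented_on pact A (\<lambda>z. \<Sum>(c, x)\<leftarrow>L. c * F x z)"
proof (induct L)
  case Nil
  then show ?case by (simp add: represented_on_zero)
next
  case (Cons a L)
  obtain c x where a: "a = (c, x)" by (cases a)
  have "represented_on pact A (\<lambda>z. c * F x z + (\<Sum>(c, x)\<leftarrow>L. c * F x z))"
    using Cons a by (intro represented_on_linear) auto
  then show ?case by (simp add: a)
qed

lemma represented_on_trans:
  assumes "represented_on pact A f" "\<And>v. v \<in> A \<Longrightarrow> represented_on pact B (basis_vec v)"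
  shows "represented_on pact B f"
proof -
  obtain g where g: "finite (supp g)" "supp g \<subseteq> A" "qeq pact f g"
    using assms(1) by (meson represented_onE)
  have "represented_on pact B (\<lambda>z. \<Sum>v\<in>supp g. g v * basis_vec v z)"
    using g(2) assms(2) by (intro represented_on_sum[OF g(1)]) blast
  then show ?thesis
    using basis_vec_expansion[OF g(1)] represented_on_qeq[OF g(3)] by simp
qed

lemma represented_on_lmul:
  assumes "represented_on pact A f"
  shows "represented_on pact ((\<lambda>v. (h # fst v, snd v)) ` A) (lmul h f)"
proof -
  obtain g where g: "finite (supp g)" "supp g \<subseteq> A" "qeq pact f g"
    using assms by (meson represented_onE)
  have "lmul h g = lmul h (\<lambda>z. \<Sum>v\<in>supp g. g v * basis_vec v z)"
    by (simp add: basis_vec_expansion[OF g(1)])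
  also have "\<dots> = (\<lambda>z. \<Sum>v\<in>supp g. g v * basis_vec (h # fst v, snd v) z)"
    by (simp add: lmul_sum[OF g(1)] lmul_scale lmul_basis_vec)
  finally have "lmul h g = (\<lambda>z. \<Sum>v\<in>supp g. g v * basis_vec (h # fst v, snd v) z)" .
  then have "represented_on pact ((\<lambda>v. (h # fst v, snd v)) ` A) (lmul h g)"
    using g(2) by (auto intro!: represented_on_sum[OF g(1)] represented_on_basis_vec)
  then show ?thesis
    by (rule represented_on_qeq[OF qeq_lmul[OF g(3)]])
qed

lemma represented_on_cspan:
  assumes "represented_on pact S f" "finite S"
  shows "\<exists>g\<in>cspan (basis_vec ` S). qeq pact f g"
proof -
  obtain g where g: "supp g \<subseteq> S" "qeq pact f g"
    using assms(1) by (meson represented_onE)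
  have "(\<lambda>z. \<Sum>u\<in>basis_vec ` S. g (inv basis_vec u) * u z) = (\<lambda>z. \<Sum>v\<in>S. g v * basis_vec v z)"
    by (simp add: sum.reindex[OF inj_on_subset[OF inj_basis_vec subset_UNIV]] inv_f_f[OF inj_basis_vec])
  then have "g \<in> cspan (basis_vec ` S)"
    unfolding cspan_def using basis_vec_expansion[OF assms(2) g(1)]
    by (intro CollectI exI[of _ "\<lambda>u. g (inv basis_vec u)"]) simp
  then show ?thesis
    using g(2) by blast
qed

lemma represented_on_empty:
  assumes "represented_on pact {} f"
  shows "f \<in> rel pact"
proof -
  obtain g where "supp g \<subseteq> {}" "qeq pact f g"
    using assms by (meson represented_onE)
  moreover from this(1) have "g = (\<lambda>z. 0)"
    by (auto simp: supp_def)
  ultimately show ?thesis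
    by (simp add: qeq_def)
qed

lemma qeq_eigenvector_shift:
  assumes eigen: "\<And>v. qeq pact (act_lc L (basis_vec v)) (\<lambda>z. e v * basis_vec v z)"
    and g: "fin_supp g" "qeq pact f g" and f: "qeq pact (act_lc L f) (\<lambda>z. \<mu> * f z)"
  shows "qeq pact (\<lambda>z. act_lc L f z - a * f z) (\<lambda>v. (e v - a) * g v)"
    and "qeq pact (act_lc L (\<lambda>z. act_lc L f z - a * f z)) (\<lambda>z. \<mu> * (act_lc L f z - a * f z))"
proof -
  have "qeq pact (act_lc L f) (\<lambda>v. e v * g v)"
    using qeq_trans[OF qeq_act_lc[OF g(2)] qeq_act_lc_diagonal[OF eigen g(1)]] .
  then show "qeq pact (\<lambda>z. act_lc L f z - a * f z) (\<lambda>v. (e v - a) * g v)"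
    using qeq_diff[OF _ qeq_scale[OF g(2), of a]] by (simp add: algebra_simps)
  have "qeq pact (act_lc L (\<lambda>z. act_lc L f z - a * f z)) (\<lambda>z. \<mu> * act_lc L f z - a * (\<mu> * f z))"
    unfolding act_lc_diff act_lc_scale
    by (rule qeq_diff[OF qeq_act_lc[OF f] qeq_scale[OF f], simplified act_lc_scale])
  then show "qeq pact (act_lc L (\<lambda>z. act_lc L f z - a * f z)) (\<lambda>z. \<mu> * (act_lc L f z - a * f z))"
    by (simp add: algebra_simps)
qed

text \<open>
  Induction on the number of unwanted eigenvalues: applying \<open>L - a\<close> for one of them kills
  that component and multiplies \<open>f\<close> by the nonzero scalar \<open>\<mu> - a\<close>.
\<close>

lemma qeq_eigenprojection:
  assumes eigen: "\<And>v. qeq pact (act_lc L (basis_vec v)) (\<lambda>z. e v * basis_vec v z)"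
    and "fin_supp g" "qeq pact f g" "qeq pact (act_lc L f) (\<lambda>z. \<mu> * f z)"
  shows "qeq pact f (\<lambda>v. if e v = \<mu> then g v else 0)"
  using assms(2-)
proof (induct "card (e ` supp g - {\<mu>})" arbitrary: f g rule: less_induct)
  case less
  have fin: "finite (supp g)"
    using less.prems(1) by (simp add: fin_supp_iff_finite_supp)
  show ?case
  proof (cases "e ` supp g - {\<mu>} = {}")
    case True
    then have "(\<lambda>v. if e v = \<mu> then g v else 0) = g"
      by (auto simp: fun_eq_iff supp_def)
    then show ?thesis using less.prems(2) by simp
  next
    case False
    then obtain a where a: "a \<in> e ` supp g" "a \<noteq> \<mu>" by auto
    define f' where "f' = (\<lambda>z. act_lc L f z - a * f z)"
    define g' where "g' = (\<lambda>v. (e v - a) * g v)"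
    have f'_g': "qeq pact f' g'" and f'_eigen: "qeq pact (act_lc L f') (\<lambda>z. \<mu> * f' z)"
      using qeq_eigenvector_shift[OF eigen less.prems, of a] by (simp_all add: f'_def g'_def)
    have "supp g' \<subseteq> supp g"
      by (auto simp: supp_def g'_def)
    then have fin_supp': "fin_supp g'"
      using fin finite_subset by (auto simp: fin_supp_iff_finite_supp)
    have fin_eigenvalues: "finite (e ` supp g - {\<mu>})"
      using fin by simp
    have "e ` supp g' - {\<mu>} \<subseteq> (e ` supp g - {\<mu>}) - {a}"
      by (auto simp: supp_def g'_def)
    then have "card (e ` supp g' - {\<mu>}) \<le> card ((e ` supp g - {\<mu>}) - {a})"
      using fin_eigenvalues by (intro card_mono) auto
    also have "\<dots> < card (e ` supp g - {\<mu>})"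
      using a fin_eigenvalues by (intro card_Diff1_less) auto
    finally have fewer: "card (e ` supp g' - {\<mu>}) < card (e ` supp g - {\<mu>})" .
    have "(\<lambda>v. if e v = \<mu> then g' v else 0) = (\<lambda>z. (\<mu> - a) * (if e z = \<mu> then g z else 0))"
      by (auto simp: g'_def fun_eq_iff)
    then have "qeq pact f' (\<lambda>z. (\<mu> - a) * (if e z = \<mu> then g z else 0))"
      using less.hyps[OF fewer fin_supp' f'_g' f'_eigen] by simp
    moreover have "qeq pact (\<lambda>z. (\<mu> - a) * f z) f'"
      using qeq_sym[OF qeq_diff[OF less.prems(3) qeq_refl[of pact "\<lambda>z. a * f z"]]]
      by (simp add: f'_def algebra_simps)
    ultimately have "qeq pact (\<lambda>z. (\<mu> - a) * f z) (\<lambda>z. (\<mu> - a) * (if e z = \<mu> then g z else 0))"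
      by (rule qeq_trans[rotated])
    then show ?thesis
      by (rule qeq_cancel_scalar[rotated]) (use a(2) in simp)
  qed
qed

lemma represented_on_eigenspace:
  assumes eigen: "\<And>v. qeq pact (act_lc L (basis_vec v)) (\<lambda>z. e v * basis_vec v z)"
    and "represented_on pact A f" "qeq pact (act_lc L f) (\<lambda>z. \<mu> * f z)"
  shows "represented_on pact {v \<in> A. e v = \<mu>} f"
proof -
  obtain g where g: "finite (supp g)" "supp g \<subseteq> A" "qeq pact f g"
    using assms(2) by (meson represented_onE)
  let ?g\<^sub>\<mu> = "\<lambda>v. if e v = \<mu> then g v else 0"
  have sub: "supp ?g\<^sub>\<mu> \<subseteq> {v \<in> supp g. e v = \<mu>}"
    by (auto simp: supp_def)
  show ?thesis
  proof (rule represented_onI)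
    show "fin_supp ?g\<^sub>\<mu>"
      using finite_subset[OF sub] g(1) by (simp add: fin_supp_iff_finite_supp)
    show "supp ?g\<^sub>\<mu> \<subseteq> {v \<in> A. e v = \<mu>}"
      using sub g(2) by blast
    show "qeq pact f ?g\<^sub>\<mu>"
      using g(1) by (intro qeq_eigenprojection[OF eigen _ g(3) assms(3)]) (simp add: fin_supp_iff_finite_supp)
  qed
qed

section \<open>Weights and creation words\<close>

fun gen_weight :: "gen \<Rightarrow> int \<times> int" where
  "gen_weight (Jp n) = (n, 2)"
| "gen_weight (Jm n) = (n, -2)"
| "gen_weight (J0 n) = (n, 0)"
| "gen_weight Kc = 0"
| "gen_weight Dd = 0"

definition weight :: "('b \<Rightarrow> int) \<Rightarrow> gen list \<times> 'b \<Rightarrow> int \<times> int" where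
  "weight qb v = sum_list (map gen_weight (fst v)) + (0, qb (snd v))"

lemma weight_Cons: "weight qb (g # w, b) = gen_weight g + weight qb (w, b)"
  by (simp add: weight_def add.assoc)

lemma gen_weight_br: "(c, h) \<in> set (br x y) \<Longrightarrow> gen_weight h = gen_weight x + gen_weight y"
  by (cases x; cases y) (auto simp: zero_prod_def split: if_splits)

definition creation_words :: "(gen list \<times> 'b) set" where
  "creation_words = {v. \<forall>g\<in>set (fst v). \<not> in_p g}"

lemma creation_word_weight_bounds:
  assumes "\<forall>g\<in>set w. \<not> in_p g"
  shows "fst (sum_list (map gen_weight w)) \<le> - int (length w)
    \<and> (\<forall>g\<in>set w. fst (sum_list (map gen_weight w)) \<le> fst (gen_weight g))
    \<and> \<bar>snd (sum_list (map gen_weight w))\<bar> \<le> 2 * int (length w)"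
  using assms
proof (induct w)
  case Nil
  then show ?case by simp
next
  case (Cons g w)
  have "fst (gen_weight g) \<le> -1" "\<bar>snd (gen_weight g)\<bar> \<le> 2"
    using Cons.prems by (cases g; simp)+
  then show ?case using Cons by auto
qed

lemma finite_creation_words_of_weight:
  assumes "inj qb"
  shows "finite {v \<in> creation_words. weight qb v = p}"
proof -
  obtain a c where p: "p = (a, c)" by (cases p)
  define n where "n = nat (- a)"
  define letters where "letters = Jp ` {a..-1} \<union> Jm ` {a..-1} \<union> J0 ` {a..-1}"
  have sub: "{v \<in> creation_words. weight qb v = p}
      \<subseteq> {w. set w \<subseteq> letters \<and> length w \<le> n} \<times> qb -` {c - 2 * int n .. c + 2 * int n}"
  proof
    fix v
    assume v: "v \<in> {v \<in> creation_words. weight qb v = p}"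
    obtain w b where vwb: "v = (w, b)" by (cases v)
    have creation: "\<forall>g\<in>set w. \<not> in_p g" and wt: "weight qb (w, b) = p"
      using v vwb by (simp_all add: creation_words_def)
    note bounds = creation_word_weight_bounds[OF creation]
    have mode: "fst (sum_list (map gen_weight w)) = a"
      and charge: "snd (sum_list (map gen_weight w)) + qb b = c"
      using arg_cong[OF wt, of fst] arg_cong[OF wt, of snd] p by (simp_all add: weight_def)
    have len: "length w \<le> n"
      using bounds mode unfolding n_def by linarith
    have "set w \<subseteq> letters"
    proof
      fix g assume "g \<in> set w"
      then have "a \<le> fst (gen_weight g)" "\<not> in_p g"
        using bounds mode creation by auto
      then show "g \<in> letters"
        unfolding letters_def by (cases g) auto
    qed
    moreover have "qb b \<in> {c - 2 * int n .. c + 2 * int n}"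
      using bounds len charge by auto
    ultimately show "v \<in> {w. set w \<subseteq> letters \<and> length w \<le> n} \<times> qb -` {c - 2 * int n .. c + 2 * int n}"
      using len vwb by simp
  qed
  have "finite {w. set w \<subseteq> letters \<and> length w \<le> n}"
    by (rule finite_lists_length_le) (simp add: letters_def)
  moreover have "finite (qb -` {c - 2 * int n .. c + 2 * int n})"
    using assms by (intro finite_vimageI) simp_all
  ultimately show ?thesis
    using finite_subset[OF sub finite_cartesian_product] by blast
qed

lemma qeq_diagonal_Cons:
  fixes pact :: "gen \<Rightarrow> 'b \<Rightarrow> (complex \<times> 'b) list"
  assumes base: "\<And>b. qeq pact (basis_vec ([X], b)) (\<lambda>z. e\<^sub>0 b * basis_vec ([], b) z)"
    and br_diagonal:
      "\<And>g u (b :: 'b). (\<lambda>z. \<Sum>(c, h)\<leftarrow>br X g. c * basis_vec (h # u, b) z) = (\<lambda>z. e g * basis_vec (g # u, b) z)"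
  shows "qeq pact (basis_vec (X # w, b)) (\<lambda>z. (sum_list (map e w) + e\<^sub>0 b) * basis_vec (w, b) z)"
proof (induct w)
  case Nil
  then show ?case using base by simp
next
  case (Cons g w)
  have "qeq pact (basis_vec (X # g # w, b))
      (\<lambda>z. basis_vec (g # X # w, b) z + e g * basis_vec (g # w, b) z)"
  proof -
    have "(\<Sum>(c, h)\<leftarrow>br X g. c * basis_vec (h # w, b) z) = e g * basis_vec (g # w, b) z" for z
      by (rule fun_cong[OF br_diagonal])
    then show ?thesis
      using qeq_comm_gen[where pact = pact and x = X and y = g and u = w and b = b] by simp
  qed
  moreover have "qeq pact (\<lambda>z. basis_vec (g # X # w, b) z + e g * basis_vec (g # w, b) z)
      (\<lambda>z. (sum_list (map e w) + e\<^sub>0 b) * basis_vec (g # w, b) z + e g * basis_vec (g # w, b) z)"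
    using qeq_add[OF qeq_lmul[OF Cons, of g] qeq_refl] by (simp add: lmul_basis_vec lmul_scale)
  ultimately show ?case
    using qeq_trans by (fastforce simp: algebra_simps)
qed

lemma br_Dd_diagonal:
  "(\<lambda>z. \<Sum>(c, h)\<leftarrow>br Dd g. c * basis_vec (h # u, b) z) = (\<lambda>z. of_int (fst (gen_weight g)) * basis_vec (g # u, b) z)"
  by (cases g) (auto simp: fun_eq_iff)

lemma br_J0_diagonal:
  "(\<lambda>z. \<Sum>(c, h)\<leftarrow>br (J0 0) g. c * basis_vec (h # u, b) z) = (\<lambda>z. of_int (snd (gen_weight g)) * basis_vec (g # u, b) z)"
  by (cases g) (auto simp: fun_eq_iff)

lemma br_Kc_diagonal:
  "(\<lambda>z. \<Sum>(c, h)\<leftarrow>br Kc g. c * basis_vec (h # u, b) z) = (\<lambda>z. 0 * basis_vec (g # u, b) z)"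
  by (cases g) (auto simp: fun_eq_iff)

lemma of_int_fst_sum_list: "sum_list (map (\<lambda>g. of_int (fst (f g))) w) = of_int (fst (sum_list (map f w)))"
  by (induct w) auto

lemma of_int_snd_sum_list: "sum_list (map (\<lambda>g. of_int (snd (f g))) w) = of_int (snd (sum_list (map f w)))"
  by (induct w) auto

lemma qeq_basis_vec_in_p:
  assumes "in_p x" "(\<lambda>z. \<Sum>(c, b')\<leftarrow>pact x b. c * basis_vec ([], b') z) = (\<lambda>z. e * basis_vec ([], b) z)"
  shows "qeq pact (basis_vec ([x], b)) (\<lambda>z. e * basis_vec ([], b) z)"
  using qeq_ind_gen[OF assms(1), of pact b] assms(2) by simp

section \<open>Straightening words in an induced module\<close>

locale graded_inducing_data =
  fixes pact :: "gen \<Rightarrow> 'b \<Rightarrow> (complex \<times> 'b) list" and qb :: "'b \<Rightarrow> int"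
    and d\<^sub>0 level charge\<^sub>0 :: complex
  assumes inj_qb: "inj qb"
    and pact_weight: "\<And>x b c b'. in_p x \<Longrightarrow> (c, b') \<in> set (pact x b) \<Longrightarrow> weight qb ([], b') = weight qb ([x], b)"
    and Dd_eigen: "\<And>b. qeq pact (basis_vec ([Dd], b)) (\<lambda>z. d\<^sub>0 * basis_vec ([], b) z)"
    and J0_eigen: "\<And>b. qeq pact (basis_vec ([J0 0], b)) (\<lambda>z. (of_int (qb b) + charge\<^sub>0) * basis_vec ([], b) z)"
    and Kc_eigen: "\<And>b. qeq pact (basis_vec ([Kc], b)) (\<lambda>z. level * basis_vec ([], b) z)"
begin

definition creation_words_upto :: "nat \<Rightarrow> int \<times> int \<Rightarrow> (gen list \<times> 'b) set" where
  "creation_words_upto n p = {v \<in> creation_words. weight qb v = p \<and> length (fst v) \<le> n}"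

lemma creation_words_upto_mono: "n \<le> n' \<Longrightarrow> creation_words_upto n p \<subseteq> creation_words_upto n' p"
  by (auto simp: creation_words_upto_def)

lemma Cons_image_creation_words_upto:
  "\<not> in_p h \<Longrightarrow> (\<lambda>v. (h # fst v, snd v)) ` creation_words_upto n p
    \<subseteq> creation_words_upto (Suc n) (gen_weight h + p)"
  by (auto simp: creation_words_upto_def creation_words_def weight_Cons)

text \<open>
  The generator \<open>x\<close> of the parabolic subalgebra is commuted to the right through the creation
  operators until it acts on \<open>b\<close>; every commutator produces a strictly shorter word.
\<close>

lemma straighten_in_p_Cons:
  assumes "in_p x" "\<forall>g\<in>set u. \<not> in_p g"
    and straighten_shorter: "\<And>w b. length w \<le> length u \<Longrightarrow>
      represented_on pact (creation_words_upto (length w) (weight qb (w, b))) (basis_vec (w, b))"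
  shows "represented_on pact (creation_words_upto (Suc (length u)) (weight qb (x # u, b)))
    (basis_vec (x # u, b))"
  using assms(2,3)
proof (induct u)
  case Nil
  have "represented_on pact (creation_words_upto 1 (weight qb ([x], b)))
      (\<lambda>z. \<Sum>(c, b')\<leftarrow>pact x b. c * basis_vec ([], b') z)"
    by (intro represented_on_sum_list represented_on_basis_vec)
      (auto simp: creation_words_upto_def creation_words_def pact_weight[OF assms(1)])
  then show ?case
    using represented_on_qeq[OF qeq_ind_gen[OF assms(1)]] by simp
next
  case (Cons h u)
  let ?A = "creation_words_upto (Suc (length (h # u))) (weight qb (x # h # u, b))"
  have "represented_on pact (creation_words_upto (Suc (length u)) (weight qb (x # u, b)))
      (basis_vec (x # u, b))"
    using Cons by simp
  from represented_on_lmul[OF this, of h]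
  have "represented_on pact ((\<lambda>v. (h # fst v, snd v)) `
      creation_words_upto (Suc (length u)) (weight qb (x # u, b))) (basis_vec (h # x # u, b))"
    by (simp add: lmul_basis_vec)
  moreover have "(\<lambda>v. (h # fst v, snd v)) ` creation_words_upto (Suc (length u)) (weight qb (x # u, b)) \<subseteq> ?A"
    using Cons_image_creation_words_upto[of h] Cons.prems(1) by (simp add: weight_Cons add.left_commute)
  ultimately have "represented_on pact ?A (basis_vec (h # x # u, b))"
    by (rule represented_on_mono)
  moreover have "represented_on pact ?A (\<lambda>z. \<Sum>(c, y)\<leftarrow>br x h. c * basis_vec (y # u, b) z)"
  proof (rule represented_on_sum_list)
    fix c y
    assume "(c, y) \<in> set (br x h)"
    then have "weight qb (y # u, b) = weight qb (x # h # u, b)"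
      by (simp add: weight_Cons gen_weight_br add.assoc)
    then show "represented_on pact ?A (basis_vec (y # u, b))"
      using Cons.prems(2)[of "y # u" b] creation_words_upto_mono by (simp add: represented_on_mono)
  qed
  ultimately have "represented_on pact ?A
      (\<lambda>z. 1 * basis_vec (h # x # u, b) z + (\<Sum>(c, y)\<leftarrow>br x h. c * basis_vec (y # u, b) z))"
    by (rule represented_on_linear)
  then show ?case
    using represented_on_qeq[OF qeq_comm_gen] by simp
qed

lemma represented_on_lmul_creation_words_upto:
  assumes rep: "represented_on pact (creation_words_upto n p) f"
    and straighten_shorter: "\<And>w b. length w \<le> n \<Longrightarrow>
      represented_on pact (creation_words_upto (length w) (weight qb (w, b))) (basis_vec (w, b))"
  shows "represented_on pact (creation_words_upto (Suc n) (gen_weight g + p)) (lmul g f)"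
proof (cases "in_p g")
  case False
  with represented_on_lmul[OF rep] show ?thesis
    by (rule represented_on_mono[OF _ Cons_image_creation_words_upto])
next
  case True
  show ?thesis
  proof (rule represented_on_trans[OF represented_on_lmul[OF rep]])
    fix v
    assume "v \<in> (\<lambda>v. (g # fst v, snd v)) ` creation_words_upto n p"
    then obtain u b' where v: "v = (g # u, b')" and u: "(u, b') \<in> creation_words_upto n p"
      by auto
    have "represented_on pact (creation_words_upto (Suc (length u)) (weight qb (g # u, b')))
        (basis_vec (g # u, b'))"
      using u by (intro straighten_in_p_Cons[OF True] straighten_shorter)
        (auto simp: creation_words_upto_def creation_words_def)
    moreover have "creation_words_upto (Suc (length u)) (weight qb (g # u, b'))
        \<subseteq> creation_words_upto (Suc n) (gen_weight g + p)"
      using u by (auto simp: creation_words_upto_def weight_Cons)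
    ultimately show "represented_on pact (creation_words_upto (Suc n) (gen_weight g + p)) (basis_vec v)"
      unfolding v by (rule represented_on_mono)
  qed
qed

lemma represented_on_creation_words_upto:
  "represented_on pact (creation_words_upto (length w) (weight qb (w, b))) (basis_vec (w, b))"
proof (induct "length w" arbitrary: w b rule: less_induct)
  case less
  show ?case
  proof (cases w)
    case Nil
    then show ?thesis
      by (intro represented_on_basis_vec) (simp add: creation_words_upto_def creation_words_def)
  next
    case (Cons g w')
    have "represented_on pact (creation_words_upto (Suc (length w')) (gen_weight g + weight qb (w', b)))
        (lmul g (basis_vec (w', b)))"
      using less Cons by (intro represented_on_lmul_creation_words_upto) simp_all
    then show ?thesis
      using Cons by (simp add: lmul_basis_vec weight_Cons)
  qed
qed

lemma represented_on_creation_words: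
  assumes "fin_supp f"
  shows "represented_on pact creation_words f"
proof (rule represented_on_trans[OF represented_on_supp[OF assms]])
  fix v :: "gen list \<times> 'b"
  have "creation_words_upto (length (fst v)) (weight qb v) \<subseteq> creation_words"
    by (auto simp: creation_words_upto_def)
  then show "represented_on pact creation_words (basis_vec v)"
    using represented_on_creation_words_upto[of "fst v" "snd v"] represented_on_mono by simp
qed

section \<open>The grading\<close>

lemma qeq_Dd_Cons:
  "qeq pact (basis_vec (Dd # w, b)) (\<lambda>z. (of_int (fst (weight qb (w, b))) + d\<^sub>0) * basis_vec (w, b) z)"
  using qeq_diagonal_Cons[OF Dd_eigen br_Dd_diagonal, of w b]
  by (simp add: of_int_fst_sum_list weight_def)

lemma qeq_J0_Cons:
  "qeq pact (basis_vec (J0 0 # w, b))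
    (\<lambda>z. (of_int (snd (weight qb (w, b))) + charge\<^sub>0) * basis_vec (w, b) z)"
  using qeq_diagonal_Cons[OF J0_eigen br_J0_diagonal, of w b]
  by (simp add: of_int_snd_sum_list weight_def add.assoc)

lemma qeq_Kc_Cons: "qeq pact (basis_vec (Kc # w, b)) (\<lambda>z. level * basis_vec (w, b) z)"
  using qeq_diagonal_Cons[OF Kc_eigen br_Kc_diagonal, of w b] by simp

definition d_eigenvalue :: "int \<Rightarrow> int \<times> int \<Rightarrow> complex" where
  "d_eigenvalue s p = of_int (fst p) + d\<^sub>0 + of_int s / 2 * (of_int (snd p) + charge\<^sub>0)
    - of_int s ^ 2 / 4 * level"

definition J0_eigenvalue :: "int \<Rightarrow> int \<times> int \<Rightarrow> complex" where
  "J0_eigenvalue s p = of_int (snd p) + charge\<^sub>0 - of_int s * level"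

lemma flow_Dd_basis_vec:
  "qeq pact (act_lc (flow s Dd) (basis_vec v)) (\<lambda>z. d_eigenvalue s (weight qb v) * basis_vec v z)"
proof -
  obtain w b where v: "v = (w, b)" by (cases v)
  have "act_lc (flow s Dd) (basis_vec (w, b)) = (\<lambda>z. basis_vec (Dd # w, b) z
      + (of_int s / 2 * basis_vec (J0 0 # w, b) z + - (of_int s ^ 2) / 4 * basis_vec (Kc # w, b) z))"
    by (simp add: lmul_basis_vec)
  moreover have "qeq pact \<dots> (\<lambda>z. (of_int (fst (weight qb (w, b))) + d\<^sub>0) * basis_vec (w, b) z
      + (of_int s / 2 * ((of_int (snd (weight qb (w, b))) + charge\<^sub>0) * basis_vec (w, b) z)
      + - (of_int s ^ 2) / 4 * (level * basis_vec (w, b) z)))"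
    by (intro qeq_add qeq_scale qeq_Dd_Cons qeq_J0_Cons qeq_Kc_Cons)
  ultimately show ?thesis
    by (simp add: v d_eigenvalue_def algebra_simps)
qed

lemma flow_J0_basis_vec:
  "qeq pact (act_lc (flow s (J0 0)) (basis_vec v)) (\<lambda>z. J0_eigenvalue s (weight qb v) * basis_vec v z)"
proof -
  obtain w b where v: "v = (w, b)" by (cases v)
  have "act_lc (flow s (J0 0)) (basis_vec (w, b))
      = (\<lambda>z. basis_vec (J0 0 # w, b) z + - of_int s * basis_vec (Kc # w, b) z)"
    by (simp add: lmul_basis_vec)
  moreover have "qeq pact \<dots> (\<lambda>z. (of_int (snd (weight qb (w, b))) + charge\<^sub>0) * basis_vec (w, b) z
      + - of_int s * (level * basis_vec (w, b) z))"
    by (intro qeq_add qeq_scale qeq_J0_Cons qeq_Kc_Cons)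
  ultimately show ?thesis
    by (simp add: v J0_eigenvalue_def algebra_simps)
qed

lemma eigenvalues_determine_weight:
  assumes "d_eigenvalue s p = d_eigenvalue s p'" "J0_eigenvalue s p = J0_eigenvalue s p'"
  shows "p = p'"
proof -
  have "snd p = snd p'"
    using assms(2) by (simp add: J0_eigenvalue_def)
  moreover from this have "fst p = fst p'"
    using assms(1) by (simp add: d_eigenvalue_def)
  ultimately show ?thesis
    by (simp add: prod_eq_iff)
qed

definition creation_words_eigen :: "int \<Rightarrow> complex \<Rightarrow> complex \<Rightarrow> (gen list \<times> 'b) set" where
  "creation_words_eigen s \<delta> q = {v \<in> creation_words. d_eigenvalue s (weight qb v) = \<delta> \<and> J0_eigenvalue s (weight qb v) = q}"

lemma finite_creation_words_eigen: "finite (creation_words_eigen s \<delta> q)"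
proof (cases "creation_words_eigen s \<delta> q = {}")
  case False
  then obtain v\<^sub>1 where "v\<^sub>1 \<in> creation_words_eigen s \<delta> q"
    by blast
  have "creation_words_eigen s \<delta> q \<subseteq> {v \<in> creation_words. weight qb v = weight qb v\<^sub>1}"
  proof
    fix v
    assume "v \<in> creation_words_eigen s \<delta> q"
    with \<open>v\<^sub>1 \<in> creation_words_eigen s \<delta> q\<close> show "v \<in> {v \<in> creation_words. weight qb v = weight qb v\<^sub>1}"
      using eigenvalues_determine_weight[of s "weight qb v" "weight qb v\<^sub>1"]
      by (simp add: creation_words_eigen_def)
  qed
  then show ?thesis
    using finite_creation_words_of_weight[OF inj_qb] finite_subset by blast
qed simp

text \<open>The mode of a creation word is negative, so its \<open>d\<close>-eigenvalue is bounded above in real part.\<close>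

lemma creation_words_eigen_empty:
  assumes "Re \<delta> > Re (d\<^sub>0 + of_int s / 2 * (q + of_int s * level) - of_int s ^ 2 / 4 * level)"
  shows "creation_words_eigen s \<delta> q = {}"
proof (rule ccontr)
  assume "creation_words_eigen s \<delta> q \<noteq> {}"
  then obtain v where v: "v \<in> creation_words" "d_eigenvalue s (weight qb v) = \<delta>"
    "J0_eigenvalue s (weight qb v) = q"
    by (auto simp: creation_words_eigen_def)
  have "fst (weight qb v) \<le> 0"
    using creation_word_weight_bounds[of "fst v"] v(1) by (simp add: creation_words_def weight_def)
  have charge: "of_int (snd (weight qb v)) + charge\<^sub>0 = q + of_int s * level"
    using v(3) by (simp add: J0_eigenvalue_def algebra_simps)
  have "\<delta> = of_int (fst (weight qb v)) + d\<^sub>0 + of_int s / 2 * (q + of_int s * level)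
      - of_int s ^ 2 / 4 * level"
    using v(2) unfolding d_eigenvalue_def charge by simp
  then have "Re \<delta> = of_int (fst (weight qb v))
      + Re (d\<^sub>0 + of_int s / 2 * (q + of_int s * level) - of_int s ^ 2 / 4 * level)"
    by simp
  with \<open>fst (weight qb v) \<le> 0\<close> assms show False
    by linarith
qed

lemma represented_on_creation_words_eigen:
  assumes "f \<in> Vmn pact s \<delta> q m n"
  shows "represented_on pact (creation_words_eigen s (\<delta> - of_int m) (q + 2 * of_int n)) f"
proof -
  have "represented_on pact creation_words f"
    using assms by (intro represented_on_creation_words) (simp add: Vmn_def)
  then have "represented_on pact {v \<in> creation_words. d_eigenvalue s (weight qb v) = \<delta> - of_int m} f"
    using assms by (intro represented_on_eigenspace[OF flow_Dd_basis_vec]) (simp_all add: Vmn_def flow_act_def)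
  then have "represented_on pact {v \<in> {v \<in> creation_words. d_eigenvalue s (weight qb v) = \<delta> - of_int m}.
      J0_eigenvalue s (weight qb v) = q + 2 * of_int n} f"
    using assms by (intro represented_on_eigenspace[OF flow_J0_basis_vec]) (simp_all add: Vmn_def flow_act_def)
  then show ?thesis
    by (simp add: creation_words_eigen_def conj_assoc)
qed

lemma grading_props: "grading_props pact b\<^sub>0 s"
  unfolding grading_props_def
proof (intro allI impI conjI)
  fix \<delta> q :: complex and m n :: int
  show "\<exists>B. finite B \<and> (\<forall>f\<in>Vmn pact s \<delta> q m n. \<exists>g\<in>cspan B. qeq pact f g)"
  proof (intro exI conjI ballI)
    let ?S = "creation_words_eigen s (\<delta> - of_int m) (q + 2 * of_int n)"
    show "finite (basis_vec ` ?S)"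
      by (simp add: finite_creation_words_eigen)
    fix f
    assume "f \<in> Vmn pact s \<delta> q m n"
    then show "\<exists>g\<in>cspan (basis_vec ` ?S). qeq pact f g"
      by (intro represented_on_cspan represented_on_creation_words_eigen finite_creation_words_eigen)
  qed
next
  fix \<delta> q :: complex and n :: int
  define bound where "bound = Re (d\<^sub>0 + of_int s / 2 * (q + 2 * of_int n + of_int s * level)
    - of_int s ^ 2 / 4 * level)"
  show "\<exists>N. \<forall>m\<le>N. \<forall>f\<in>Vmn pact s \<delta> q m n. f \<in> rel pact"
  proof (intro exI allI impI ballI)
    fix m f
    assume "m \<le> \<lceil>Re \<delta> - bound\<rceil> - 1" and f: "f \<in> Vmn pact s \<delta> q m n"
    then have "m < \<lceil>Re \<delta> - bound\<rceil>"
      by simp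
    then have "Re (\<delta> - of_int m) > bound"
      by (simp add: less_ceiling_iff)
    then have "creation_words_eigen s (\<delta> - of_int m) (q + 2 * of_int n) = {}"
      unfolding bound_def by (rule creation_words_eigen_empty)
    then show "f \<in> rel pact"
      using represented_on_creation_words_eigen[OF f] by (simp add: represented_on_empty)
  qed
qed

end

section \<open>The three modules\<close>

lemma graded_inducing_data_triv:
  "graded_inducing_data (pact_triv k) (\<lambda>_. 0) 0 (of_int k) 0"
proof
  show "inj (\<lambda>_ :: unit. 0 :: int)"
    by (simp add: inj_def)
  show "weight (\<lambda>_. 0) ([], b') = weight (\<lambda>_. 0) ([x], b)"
    if "in_p x" "(c, b') \<in> set (pact_triv k x b)" for x b c b'
    using that by (cases x) (auto simp: weight_def)
  show "qeq (pact_triv k) (basis_vec ([Dd], b)) (\<lambda>z. 0 * basis_vec ([], b) z)" for b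
    by (rule qeq_basis_vec_in_p) simp_all
  show "qeq (pact_triv k) (basis_vec ([J0 0], b)) (\<lambda>z. (of_int 0 + 0) * basis_vec ([], b) z)" for b
    by (rule qeq_basis_vec_in_p) simp_all
  show "qeq (pact_triv k) (basis_vec ([Kc], b)) (\<lambda>z. of_int k * basis_vec ([], b) z)" for b
    by (rule qeq_basis_vec_in_p) simp_all
qed

lemma graded_inducing_data_plus:
  "graded_inducing_data (pact_plus k j) (\<lambda>m. 2 * int m) (of_real (delta_j k j)) (of_int k) (of_real (- 2 * j))"
proof
  show "inj (\<lambda>m :: nat. 2 * int m)"
    by (simp add: inj_def)
  show "weight (\<lambda>m. 2 * int m) ([], b') = weight (\<lambda>m. 2 * int m) ([x], b)"
    if "in_p x" "(c, b') \<in> set (pact_plus k j x b)" for x b c b'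
    using that by (cases x) (auto simp: weight_def split: if_splits)
  show "qeq (pact_plus k j) (basis_vec ([Dd], b)) (\<lambda>z. of_real (delta_j k j) * basis_vec ([], b) z)" for b
    by (rule qeq_basis_vec_in_p) simp_all
  show "qeq (pact_plus k j) (basis_vec ([J0 0], b))
      (\<lambda>z. (of_int (2 * int b) + of_real (- 2 * j)) * basis_vec ([], b) z)" for b
    by (rule qeq_basis_vec_in_p) simp_all
  show "qeq (pact_plus k j) (basis_vec ([Kc], b)) (\<lambda>z. of_int k * basis_vec ([], b) z)" for b
    by (rule qeq_basis_vec_in_p) simp_all
qed

lemma graded_inducing_data_minus:
  "graded_inducing_data (pact_minus k j) (\<lambda>m. - 2 * int m) (of_real (delta_j k j)) (of_int k) (of_real (2 * j))"
proof
  show "inj (\<lambda>m :: nat. - 2 * int m)"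
    by (simp add: inj_def)
  show "weight (\<lambda>m. - 2 * int m) ([], b') = weight (\<lambda>m. - 2 * int m) ([x], b)"
    if "in_p x" "(c, b') \<in> set (pact_minus k j x b)" for x b c b'
    using that by (cases x) (auto simp: weight_def split: if_splits)
  show "qeq (pact_minus k j) (basis_vec ([Dd], b)) (\<lambda>z. of_real (delta_j k j) * basis_vec ([], b) z)" for b
    by (rule qeq_basis_vec_in_p) simp_all
  show "qeq (pact_minus k j) (basis_vec ([J0 0], b))
      (\<lambda>z. (of_int (- 2 * int b) + of_real (2 * j)) * basis_vec ([], b) z)" for b
    by (rule qeq_basis_vec_in_p) simp_all
  show "qeq (pact_minus k j) (basis_vec ([Kc], b)) (\<lambda>z. of_int k * basis_vec ([], b) z)" for b
    by (rule qeq_basis_vec_in_p) simp_all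
qed

theorem proposition3p9:
  fixes k s :: int and j :: real
  assumes "k < -2"
    and "\<exists>t::nat. t \<ge> 1 \<and> j = - real t / 2"
  shows "grading_props (pact_triv k) () s
       \<and> grading_props (pact_plus k j) 0 s
       \<and> grading_props (pact_minus k j) 0 s"
  using graded_inducing_data.grading_props[OF graded_inducing_data_triv]
    graded_inducing_data.grading_props[OF graded_inducing_data_plus]
    graded_inducing_data.grading_props[OF graded_inducing_data_minus]
  by blast

end
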